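(* With $E^\star_{as}(M,B)$ and $E^\infty_{\rm No\text{-}HARQ}$ as defined below, $$\lim_{M\to\infty}E^\star_{as}(M,B)=\int_0^{E^\infty_{\rm No\text{-}HARQ}}Q\!\left(\frac{E-B\ln 2}{\sqrt{2E}}\right)\mathrm{d}E.$$
   Context: Fix $B>0$ and $T_{\rm rel}\in(0,1)$. Let $Q(x)=\frac{1}{\sqrt{2\pi}}\int_x^\infty e^{-t^2/2}\,dt$. Define $$E^\infty_{\rm No\text{-}HARQ}=\frac{\big(Q^{-1}(1-T_{\rm rel})\big)^2}{2}\left(1+\sqrt{1+\frac{2B\ln 2}{\big(Q^{-1}(1-T_{\rm rel})\big)^2}}\right)^2,$$ and for $M\ge1$, $$E^\star_{as}(M,B)=\min\Big\{E_1+\sum_{m=2}^M Q\!\left(\frac{\sum_{i=1}^{m-1}E_i-B\ln 2}{\sqrt{2\sum_{i=1}^{m-1}E_i}}\right)E_m\;:\;E_1,\dots,E_M\ge0,\ \sum_{m=1}^M E_m=E^\infty_{\rm No\text{-}HARQ}\Big\},$$ where $Q(\cdot)$ at zero cumulative energy is interpreted as $1$. (This is the limit, as the latency budget tends to infinity, of the minimum average energy of an IR-HARQ scheme with $M$ rounds.) *)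

theory Defs
  imports "HOL-Analysis.Analysis"
begin

definition Qf :: "real \<Rightarrow> real" where
  "Qf x = (1 / sqrt (2 * pi)) * integral {x..} (\<lambda>t. exp (- (t\<^sup>2) / 2))"

text \<open>Inverse of Q (Q is a strictly decreasing bijection from R onto (0,1)).\<close>
definition Qinv :: "real \<Rightarrow> real" where
  "Qinv y = (THE x. Qf x = y)"

definition E_noHARQ_inf :: "real \<Rightarrow> real \<Rightarrow> real" where
  "E_noHARQ_inf B T =
     (let q = Qinv (1 - T) in
      (q\<^sup>2 / 2) * (1 + sqrt (1 + 2 * B * ln 2 / q\<^sup>2))\<^sup>2)"

definition Qw :: "real \<Rightarrow> real \<Rightarrow> real" where
  "Qw B S = (if S = 0 then 1 else Qf ((S - B * ln 2) / sqrt (2 * S)))"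

definition avg_energy :: "nat \<Rightarrow> real \<Rightarrow> (nat \<Rightarrow> real) \<Rightarrow> real" where
  "avg_energy M B E = E 1 + (\<Sum>m = 2..M. Qw B (\<Sum>i = 1..m-1. E i) * E m)"

definition E_as_star :: "nat \<Rightarrow> real \<Rightarrow> real \<Rightarrow> real" where
  "E_as_star M B T = Inf {avg_energy M B E | E.
       (\<forall>m\<in>{1..M}. E m \<ge> 0) \<and> (\<Sum>m = 1..M. E m) = E_noHARQ_inf B T}"

end

theory Submission
  imports Defs "HOL-Probability.Distributions"
begin

text \<open>The average energy of an allocation is a left Riemann sum of the antitone function
  \<open>S \<mapsto> Qw B S\<close> over the partition of \<open>[0, A]\<close> by cumulative energies, where
  \<open>A = E_noHARQ_inf B T\<close>. Hence it always dominates \<open>\<integral>\<^sub>0\<^sup>A Qw B\<close>, while for the uniform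
  allocation into \<open>M\<close> steps of width \<open>A / M\<close> the sum telescopes against the integral and
  exceeds it by at most \<open>(A / M) \<cdot> Qw B 0 = A / M\<close>. So \<open>E_as_star M B T\<close> is squeezed
  between \<open>\<integral>\<^sub>0\<^sup>A Qw B\<close> and \<open>\<integral>\<^sub>0\<^sup>A Qw B + A / M\<close>.\<close>

lemma integrable_on_antimono_on:
  fixes f :: "real \<Rightarrow> real"
  assumes "antimono_on {a..b} f"
  shows "f integrable_on {a..b}"
proof -
  have "mono_on {a..b} (\<lambda>x. - f x)"
    using assms by (auto intro!: mono_onI dest: monotone_onD)
  then have "(\<lambda>x. - (- f x)) integrable_on {a..b}"
    by (intro integrable_neg integrable_on_mono_on)
  then show ?thesis by simp
qed

lemma integral_antimono_on_le:
  fixes f :: "real \<Rightarrow> real"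
  assumes "antimono_on {a..b} f" and "a \<le> b"
  shows "integral {a..b} f \<le> (b - a) * f a"
proof -
  have "integral {a..b} f \<le> integral {a..b} (\<lambda>_. f a)"
    using assms by (intro integral_le integrable_on_antimono_on[OF assms(1)] integrable_const_ivl)
      (auto simp: monotone_on_def)
  then show ?thesis using assms(2) by simp
qed

lemma integral_antimono_on_ge:
  fixes f :: "real \<Rightarrow> real"
  assumes "antimono_on {a..b} f" and "a \<le> b"
  shows "(b - a) * f b \<le> integral {a..b} f"
proof -
  have "integral {a..b} (\<lambda>_. f b) \<le> integral {a..b} f"
    using assms by (intro integral_le integrable_on_antimono_on[OF assms(1)] integrable_const_ivl)
      (auto simp: monotone_on_def)
  then show ?thesis using assms(2) by simp
qed

lemma integral_antimono_on_combine:
  fixes f :: "real \<Rightarrow> real"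
  assumes "antimono_on {0..} f" and "0 \<le> a" and "a \<le> b"
  shows "integral {0..b} f = integral {0..a} f + integral {a..b} f"
proof -
  have "f integrable_on {0..b}"
    using assms(1) by (rule integrable_on_antimono_on[OF monotone_on_subset]) auto
  then show ?thesis
    using assms(2,3) by (simp add: Henstock_Kurzweil_Integration.integral_combine)
qed

lemma integral_le_left_Riemann_sum:
  fixes f :: "real \<Rightarrow> real" and E :: "nat \<Rightarrow> real"
  assumes f: "antimono_on {0..} f" and E: "\<forall>i\<in>{1..k}. 0 \<le> E i"
  shows "integral {0..\<Sum>i=1..k. E i} f \<le> (\<Sum>m=1..k. f (\<Sum>i=1..m-1. E i) * E m)"
  using E
proof (induction k)
  case 0
  then show ?case by simp
next
  case (Suc k)
  define S where "S = (\<Sum>i=1..k. E i)"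
  have S: "0 \<le> S" and e: "0 \<le> E (Suc k)"
    using Suc.prems unfolding S_def by (auto intro: sum_nonneg)
  have "integral {S..S + E (Suc k)} f \<le> f S * E (Suc k)"
    using integral_antimono_on_le[OF monotone_on_subset[OF f], of S "S + E (Suc k)"] S e
    by (auto simp: mult.commute)
  moreover have "integral {0..S} f \<le> (\<Sum>m=1..k. f (\<Sum>i=1..m-1. E i) * E m)"
    using Suc by (simp add: S_def)
  ultimately show ?case
    using integral_antimono_on_combine[OF f S, of "S + E (Suc k)"] e by (simp add: S_def)
qed

lemma uniform_left_Riemann_sum_le:
  fixes f :: "real \<Rightarrow> real"
  assumes f: "antimono_on {0..} f" and d: "0 \<le> d"
  shows "(\<Sum>m=1..k. f (real (m-1) * d) * d)
           \<le> integral {0..real k * d} f + d * (f 0 - f (real k * d))"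
proof (induction k)
  case 0
  then show ?case by simp
next
  case (Suc k)
  define S where "S = real k * d"
  have S: "0 \<le> S" using d by (simp add: S_def)
  have "d * f (S + d) \<le> integral {S..S + d} f"
    using integral_antimono_on_ge[OF monotone_on_subset[OF f], of S "S + d"] S d by auto
  then show ?case
    using Suc integral_antimono_on_combine[OF f S, of "S + d"] d
    by (simp add: S_def algebra_simps)
qed

lemma Qf_eq_integral_std_normal_density: "Qf x = integral {x..} std_normal_density"
  unfolding Qf_def std_normal_density_def by simp

lemma std_normal_density_integrable_on: "std_normal_density integrable_on S"
  if "S \<in> sets lborel"
proof -
  have "integrable lborel std_normal_density"
    using std_normal_moment_even[of 0] by (simp add: has_bochner_integral_iff)
  then have "integrable lborel (\<lambda>t. indicator S t *\<^sub>R std_normal_density t)"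
    using that by (rule integrable_mult_indicator[rotated])
  then have "(\<lambda>t. indicator S t *\<^sub>R std_normal_density t) integrable_on UNIV"
    by (rule integrable_on_lborel)
  then have "(\<lambda>t. if t \<in> S then std_normal_density t else 0) integrable_on UNIV"
    by (rule iffD1[OF integrable_cong, rotated]) (simp add: indicator_def)
  then show ?thesis
    by (simp add: integrable_restrict_UNIV)
qed

lemma Qf_nonneg: "0 \<le> Qf x"
  unfolding Qf_eq_integral_std_normal_density
  by (rule integral_nonneg[OF std_normal_density_integrable_on]) auto

lemma Qf_le_1: "Qf x \<le> 1"
proof -
  have "integral UNIV std_normal_density = 1"
    using std_normal_moment_even[of 0] integral_lborel[of std_normal_density]
    by (simp add: has_bochner_integral_iff)
  moreover have "Qf x \<le> integral UNIV std_normal_density"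
    unfolding Qf_eq_integral_std_normal_density
    by (rule integral_subset_le[OF _ std_normal_density_integrable_on
          std_normal_density_integrable_on]) auto
  ultimately show ?thesis by simp
qed

lemma Qf_antimono: "antimono Qf"
  unfolding Qf_eq_integral_std_normal_density
  by (intro monotoneI integral_subset_le std_normal_density_integrable_on) auto

lemma diff_div_sqrt_mono:
  fixes c S S' :: real
  assumes "0 \<le> c" and "0 < S" and "S \<le> S'"
  shows "(S - c) / sqrt (2 * S) \<le> (S' - c) / sqrt (2 * S')"
proof -
  define u v where "u = sqrt S" and "v = sqrt S'"
  have u: "0 < u" and uv: "u \<le> v"
    using assms by (simp_all add: u_def v_def)
  have "(S - c) / sqrt (2 * S) = (u - c / u) / sqrt 2"
    using assms(2) u by (simp add: u_def real_sqrt_mult field_simps)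
  moreover have "(S' - c) / sqrt (2 * S') = (v - c / v) / sqrt 2"
    using assms(2,3) u uv by (simp add: v_def real_sqrt_mult field_simps)
  moreover have "c / v \<le> c / u"
    using assms(1) u uv by (simp add: frac_le)
  ultimately show ?thesis
    using uv by (simp add: divide_right_mono)
qed

lemma Qw_nonneg: "0 \<le> Qw B S"
  by (simp add: Qw_def Qf_nonneg)

lemma Qw_antimono_on:
  assumes "0 \<le> B"
  shows "antimono_on {0..} (Qw B)"
proof (rule monotone_onI)
  fix S S' :: real
  assume "S \<in> {0..}" and "S \<le> S'"
  show "Qw B S' \<le> Qw B S"
  proof (cases "S = 0")
    case True
    then show ?thesis by (simp add: Qw_def Qf_le_1)
  next
    case False
    with \<open>S \<in> {0..}\<close> \<open>S \<le> S'\<close> have "0 < S" "S' \<noteq> 0" by auto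
    then show ?thesis
      using assms \<open>S \<le> S'\<close> diff_div_sqrt_mono[of "B * ln 2" S S'] Qf_antimono
      by (auto simp: Qw_def dest: antimonoD)
  qed
qed

lemma avg_energy_eq_left_Riemann_sum:
  assumes "1 \<le> M"
  shows "avg_energy M B E = (\<Sum>m=1..M. Qw B (\<Sum>i=1..m-1. E i) * E m)"
proof -
  have "Qw B (\<Sum>i=1..0. E i) = 1"
    by (simp add: Qw_def)
  then show ?thesis
    using assms by (simp add: avg_energy_def sum.atLeast_Suc_atMost numeral_2_eq_2)
qed

lemma integral_Qw_le_avg_energy:
  assumes "0 \<le> B" and "1 \<le> M" and "\<forall>m\<in>{1..M}. 0 \<le> E m"
  shows "integral {0..\<Sum>m=1..M. E m} (Qw B) \<le> avg_energy M B E"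
  using integral_le_left_Riemann_sum[OF Qw_antimono_on[OF assms(1)] assms(3)]
  by (simp add: avg_energy_eq_left_Riemann_sum[OF assms(2)])

lemma avg_energy_uniform_le:
  assumes "0 \<le> B" and "0 \<le> A" and "1 \<le> M"
  shows "avg_energy M B (\<lambda>_. A / M) \<le> integral {0..A} (Qw B) + A / M"
proof -
  define d where "d = A / M"
  have d: "0 \<le> d" and A: "real M * d = A"
    using assms(2,3) by (simp_all add: d_def)
  have "avg_energy M B (\<lambda>_. d) = (\<Sum>m=1..M. Qw B (real (m-1) * d) * d)"
    by (simp add: avg_energy_eq_left_Riemann_sum[OF assms(3)])
  also have "\<dots> \<le> integral {0..real M * d} (Qw B) + d * (Qw B 0 - Qw B (real M * d))"
    by (rule uniform_left_Riemann_sum_le[OF Qw_antimono_on[OF assms(1)] d])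
  also have "\<dots> \<le> integral {0..A} (Qw B) + d"
    using d Qw_nonneg[of B A] by (simp add: A Qw_def mult_left_le)
  finally show ?thesis by (simp add: d_def)
qed

lemma E_noHARQ_inf_nonneg: "0 \<le> E_noHARQ_inf B T"
  by (simp add: E_noHARQ_inf_def Let_def)

lemma E_as_star_bounds:
  fixes B T :: real
  assumes "0 \<le> B" and "1 \<le> M"
  defines "A \<equiv> E_noHARQ_inf B T"
  shows "integral {0..A} (Qw B) \<le> E_as_star M B T"
    and "E_as_star M B T \<le> integral {0..A} (Qw B) + A / M"
proof -
  define X where "X = {avg_energy M B E | E. (\<forall>m\<in>{1..M}. E m \<ge> 0) \<and> (\<Sum>m = 1..M. E m) = A}"
  have star: "E_as_star M B T = Inf X"
    by (simp add: X_def E_as_star_def A_def)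
  have uniform: "avg_energy M B (\<lambda>_. A / M) \<in> X"
    using assms(2) E_noHARQ_inf_nonneg[of B T] by (auto simp: X_def A_def)
  have lower: "integral {0..A} (Qw B) \<le> x" if "x \<in> X" for x
    using that integral_Qw_le_avg_energy[OF assms(1,2)] by (auto simp: X_def)
  show "integral {0..A} (Qw B) \<le> E_as_star M B T"
    unfolding star using uniform lower by (intro cInf_greatest) auto
  have "E_as_star M B T \<le> avg_energy M B (\<lambda>_. A / M)"
    unfolding star using uniform lower by (intro cInf_lower) (auto simp: bdd_below_def)
  also have "\<dots> \<le> integral {0..A} (Qw B) + A / M"
    using avg_energy_uniform_le[OF assms(1) E_noHARQ_inf_nonneg assms(2)] by (simp add: A_def)
  finally show "E_as_star M B T \<le> integral {0..A} (Qw B) + A / M" .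
qed

theorem mainTheorem7:
  fixes B T :: real
  assumes "B > 0" and "0 < T" and "T < 1"
  shows "(\<lambda>M. E_as_star M B T) \<longlonglongrightarrow>
           integral {0..E_noHARQ_inf B T} (\<lambda>E. Qf ((E - B * ln 2) / sqrt (2 * E)))"
proof -
  define A where "A = E_noHARQ_inf B T"
  define I where "I = integral {0..A} (Qw B)"
  have B: "0 \<le> B" using assms(1) by simp
  have "integral {0..A} (\<lambda>E. Qf ((E - B * ln 2) / sqrt (2 * E))) = I"
    unfolding I_def by (rule integral_spike[where S = "{0}"]) (auto simp: Qw_def)
  moreover have "(\<lambda>M. E_as_star M B T) \<longlonglongrightarrow> I"
  proof (rule tendsto_sandwich)
    show "\<forall>\<^sub>F M in sequentially. I \<le> E_as_star M B T"
      using E_as_star_bounds(1)[OF B] by (auto simp: I_def A_def intro: eventually_sequentiallyI)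
    show "\<forall>\<^sub>F M in sequentially. E_as_star M B T \<le> I + A / M"
      using E_as_star_bounds(2)[OF B] by (auto simp: I_def A_def intro: eventually_sequentiallyI)
    show "(\<lambda>M. I + A / real M) \<longlonglongrightarrow> I"
      using tendsto_add[OF tendsto_const lim_const_over_n, of I A] by simp
  qed simp
  ultimately show ?thesis by (simp add: A_def)
qed

end
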